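(* There exists $C>0$ such that for all $t\in[0,T]$ and all $h\in(0,1]$, $$\int_0^t\big|g^{(h)}(t,u)-1\big|\,du\le C\,h^{\alpha},\qquad \int_0^t\big|g^{(h)}(t,u)-1\big|^2\,du\le C\,h.$$
   Context: Fix $T>0$ and $\alpha\in(1/2,1)$. Let $K(u)=\frac{u^{\alpha-1}}{\Gamma(\alpha)}\mathbf 1_{u>0}$ and $L(u)=\frac{u^{-\alpha}}{\Gamma(1-\alpha)}\mathbf 1_{u>0}$. For $h>0$ let $\varphi_h(t)=h\lfloor t/h\rfloor$. Define $K^{(h)}(t,s)=K(\varphi_h(t)-s)\mathbf 1_{0\le s<\varphi_h(t)}$ and $g^{(h)}(t,s)=\int_s^tL(t-v)K^{(h)}(v,s)\,dv$ for $0\le s<t\le T$. *)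

theory Defs
  imports "HOL-Analysis.Analysis"
begin

definition kerK :: "real \<Rightarrow> real \<Rightarrow> real" where
  "kerK \<alpha> u = (if u > 0 then u powr (\<alpha> - 1) / Gamma \<alpha> else 0)"

definition kerL :: "real \<Rightarrow> real \<Rightarrow> real" where
  "kerL \<alpha> u = (if u > 0 then u powr (- \<alpha>) / Gamma (1 - \<alpha>) else 0)"

definition phi :: "real \<Rightarrow> real \<Rightarrow> real" where
  "phi h t = h * of_int \<lfloor>t / h\<rfloor>"

definition Kh :: "real \<Rightarrow> real \<Rightarrow> real \<Rightarrow> real \<Rightarrow> real" where
  "Kh \<alpha> h t s = (if 0 \<le> s \<and> s < phi h t then kerK \<alpha> (phi h t - s) else 0)"

definition gh :: "real \<Rightarrow> real \<Rightarrow> real \<Rightarrow> real \<Rightarrow> real" where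
  "gh \<alpha> h t s = (LINT v:{s..t}|lborel. kerL \<alpha> (t - v) * Kh \<alpha> h v s)"

end

theory Submission
  imports Defs
begin

text \<open>
  Rescaling time by h gives g^(h)(t, s) = g^(1)(t/h, s/h), so both integrals are h times the
  corresponding integrals of g^(1) over [0, t/h]. By the Beta integral the convolution of L with
  the unrounded kernel K is identically 1, so
    g^(1)(t, s) - 1 = \<integral> L(t - v) (K^(1)(v, s) - K(v - s)) dv  over v \<in> [s, t].
  Rounding v down to an integer changes K(v - s) by at most a multiple of
  d^(\<alpha>-1) w^(\<alpha>-1) / (1 + w), where w = v - s and d = 1 - frac s is the distance from s to the
  next integer; the convolution of L with this profile at lag r decays like (1 + r)^(-\<alpha>), hence
    |g^(1)(t, s) - 1| \<le> C d^(\<alpha>-1) (1 + t - s)^(-\<alpha>).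
  Raised to the power n, the singular factor d^(n(\<alpha>-1)) is integrable over every unit cell as
  long as n(1 - \<alpha>) < 1, and integrating cell by cell leaves \<Sum>_{k \<le> t} (k + 1)^(-n\<alpha>). For n = 1
  this is O((1 + t)^(1-\<alpha>)), which becomes h^\<alpha> after rescaling; for n = 2 it is bounded because
  \<alpha> > 1/2, which gives h.
\<close>

lemma set_integral_real_affine:
  fixes f :: "real \<Rightarrow> real"
  assumes "c \<noteq> 0"
  shows "(LINT v:A|lborel. f v) = \<bar>c\<bar> * (LINT x:{x. t + c * x \<in> A}|lborel. f (t + c * x))"
    and "set_integrable lborel A f \<longleftrightarrow> set_integrable lborel {x. t + c * x \<in> A} (\<lambda>x. f (t + c * x))"
proof -
  have ind: "indicator A (t + c * x) = (indicator {x. t + c * x \<in> A} x :: real)" for x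
    by (simp add: indicator_def)
  show "(LINT v:A|lborel. f v) = \<bar>c\<bar> * (LINT x:{x. t + c * x \<in> A}|lborel. f (t + c * x))"
    using lborel_integral_real_affine[OF assms, of "\<lambda>v. indicator A v *\<^sub>R f v" t]
    by (simp add: set_lebesgue_integral_def ind)
  show "set_integrable lborel A f \<longleftrightarrow> set_integrable lborel {x. t + c * x \<in> A} (\<lambda>x. f (t + c * x))"
    using lborel_integrable_real_affine_iff[OF assms, of "\<lambda>v. indicator A v *\<^sub>R f v" t]
    by (simp add: set_integrable_def ind)
qed

lemma has_integral_nonneg_imp_set_lborel:
  fixes f :: "real \<Rightarrow> real"
  assumes f: "(f has_integral I) S" and nonneg: "\<And>x. x \<in> S \<Longrightarrow> 0 \<le> f x"
    and [measurable]: "S \<in> sets borel" "f \<in> borel_measurable borel"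
  shows "set_integrable lborel S f" and "(LINT x:S|lborel. f x) = I"
proof -
  have "f absolutely_integrable_on S"
    using f nonneg by (intro nonnegative_absolutely_integrable_1) (auto simp: integrable_on_def)
  moreover have "(\<lambda>x. indicator S x *\<^sub>R f x) \<in> borel_measurable lborel"
    by measurable
  ultimately show int: "set_integrable lborel S f"
    by (simp add: set_integrable_def integrable_completion)
  show "(LINT x:S|lborel. f x) = I"
    using set_borel_integral_eq_integral(2)[OF int] f by (simp add: integral_unique)
qed

lemma set_integral_mono':
  fixes f g :: "'a \<Rightarrow> real"
  assumes "set_integrable M A g" "\<And>x. x \<in> A \<Longrightarrow> f x \<le> g x" "\<And>x. x \<in> A \<Longrightarrow> 0 \<le> g x"
  shows "(LINT x:A|M. f x) \<le> (LINT x:A|M. g x)"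
  using assms unfolding set_lebesgue_integral_def set_integrable_def
  by (intro integral_mono') (auto simp: indicator_def)

lemma set_integral_mono_set_nonneg:
  fixes f :: "'a \<Rightarrow> real"
  assumes "set_integrable M B f" "A \<subseteq> B" "\<And>x. x \<in> B \<Longrightarrow> 0 \<le> f x"
  shows "(LINT x:A|M. f x) \<le> (LINT x:B|M. f x)"
  using assms unfolding set_lebesgue_integral_def set_integrable_def
  by (intro integral_mono') (auto simp: indicator_def)

lemma abs_set_integral_le:
  fixes f g :: "'a \<Rightarrow> real"
  assumes g: "set_integrable M A g" and f: "set_borel_measurable M A f"
    and le: "\<And>x. x \<in> A \<Longrightarrow> \<bar>f x\<bar> \<le> g x"
  shows "set_integrable M A f" and "\<bar>LINT x:A|M. f x\<bar> \<le> (LINT x:A|M. g x)"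
proof -
  show int: "set_integrable M A f"
    using le by (intro set_integrable_bound[OF g f] AE_I2) (auto intro: order_trans[OF _ abs_ge_self])
  have "\<bar>LINT x:A|M. f x\<bar> \<le> (LINT x:A|M. \<bar>f x\<bar>)"
    using set_integral_norm_bound[OF int] by simp
  also have "\<dots> \<le> (LINT x:A|M. g x)"
    using le by (intro set_integral_mono' g) (auto intro: order_trans[OF abs_ge_zero])
  finally show "\<bar>LINT x:A|M. f x\<bar> \<le> (LINT x:A|M. g x)" .
qed

lemma set_integral_powr_reflected:
  fixes p r :: real
  assumes "-1 < p" "0 \<le> r"
  shows "set_integrable lborel {0..r} (\<lambda>x. (r - x) powr p)"
    and "(LINT x:{0..r}|lborel. (r - x) powr p) = r powr (p + 1) / (p + 1)"
proof -
  note powr = has_integral_nonneg_imp_set_lborel[OF has_integral_powr_from_0[OF assms]]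
  have reflect: "{x. r + (-1) * x \<in> {0..r}} = {0..r}"
    by auto
  show "set_integrable lborel {0..r} (\<lambda>x. (r - x) powr p)"
    using set_integral_real_affine(2)[where c="-1" and A="{0..r}" and f="\<lambda>x. x powr p" and t=r,
        unfolded reflect] powr
    by simp
  show "(LINT x:{0..r}|lborel. (r - x) powr p) = r powr (p + 1) / (p + 1)"
    using set_integral_real_affine(1)[where c="-1" and A="{0..r}" and f="\<lambda>x. x powr p" and t=r,
        unfolded reflect] powr
    by simp
qed

lemma has_integral_powr_from_1:
  fixes e r :: real
  assumes "e \<noteq> -1" "1 \<le> r"
  shows "((\<lambda>x. x powr e) has_integral (r powr (e + 1) - 1) / (e + 1)) {1..r}"
proof -
  have "e + 1 \<noteq> 0"
    using assms by linarith
  have "((\<lambda>x. x powr e) has_integral (r powr (e + 1) / (e + 1) - 1 powr (e + 1) / (e + 1))) {1..r}"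
    using assms \<open>e + 1 \<noteq> 0\<close>
    by (intro fundamental_theorem_of_calculus)
       (auto intro!: derivative_eq_intros simp flip: has_real_derivative_iff_has_vector_derivative)
  then show ?thesis
    by (simp add: diff_divide_distrib)
qed

section \<open>The kernels and the Beta identity\<close>

lemma powr_minus_mult_powr_pred:
  fixes h :: real
  assumes "0 < h"
  shows "h powr - a * h powr (a - 1) = 1 / h"
  using assms by (simp add: powr_add[symmetric])

lemma kerL_nonneg: "a < 1 \<Longrightarrow> 0 \<le> kerL a x"
  by (simp add: kerL_def Gamma_real_pos)

lemma kerK_eq_powr: "0 \<le> x \<Longrightarrow> kerK a x = x powr (a - 1) / Gamma a"
  by (auto simp: kerK_def)

lemma kerL_eq_powr: "0 \<le> x \<Longrightarrow> kerL a x = x powr - a / Gamma (1 - a)"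
  by (auto simp: kerL_def)

lemma kerK_antimono:
  assumes "0 < a" "a < 1" "0 < x" "x \<le> y"
  shows "kerK a y \<le> kerK a x"
  using assms powr_mono2'[of "a - 1" x y] by (simp add: kerK_def divide_right_mono Gamma_real_pos)

lemma kerK_scale: "0 < h \<Longrightarrow> kerK a (h * x) = h powr (a - 1) * kerK a x"
  by (auto simp: kerK_def powr_mult zero_less_mult_iff)

lemma kerL_scale: "0 < h \<Longrightarrow> kerL a (h * x) = h powr - a * kerL a x"
  by (auto simp: kerL_def powr_mult zero_less_mult_iff)

lemma set_integral_kerL_kerK_unit:
  assumes "0 < a" "a < 1"
  shows "set_integrable lborel {0..1} (\<lambda>x. kerL a (1 - x) * kerK a x)"
    and "(LINT x:{0..1}|lborel. kerL a (1 - x) * kerK a x) = 1"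
proof -
  define G where "G = Gamma a * Gamma (1 - a)"
  have "0 < G"
    using assms by (simp add: G_def Gamma_real_pos)
  define beta where "beta = (\<lambda>x::real. x powr (a - 1) * (1 - x) powr ((1 - a) - 1))"
  have eq: "kerL a (1 - x) * kerK a x = beta x / G" if "x \<in> {0..1}" for x
    using that by (auto simp: kerL_def kerK_def G_def beta_def powr_minus_divide)
  have beta_int: "set_integrable lborel {0..1} beta"
    using integrable_Beta[of a "1 - a"] assms by (simp add: beta_def)
  have "(LINT x:{0..1}|lborel. beta x) = G"
    using set_borel_integral_eq_integral(2)[OF beta_int] has_integral_Beta_real[of a "1 - a"] assms
    by (simp add: integral_unique beta_def Beta_def G_def)
  moreover have "set_integrable lborel {0..1} (\<lambda>x. kerL a (1 - x) * kerK a x)"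
    using beta_int by (subst set_integrable_cong[OF refl refl eq]) auto
  moreover have "(LINT x:{0..1}|lborel. kerL a (1 - x) * kerK a x) = (LINT x:{0..1}|lborel. beta x / G)"
    using eq by (intro set_lebesgue_integral_cong) auto
  ultimately show "set_integrable lborel {0..1} (\<lambda>x. kerL a (1 - x) * kerK a x)"
    and "(LINT x:{0..1}|lborel. kerL a (1 - x) * kerK a x) = 1"
    using \<open>0 < G\<close> by simp_all
qed

lemma set_integral_kerL_kerK:
  assumes "0 < a" "a < 1" "0 < r"
  shows "set_integrable lborel {0..r} (\<lambda>x. kerL a (r - x) * kerK a x)"
    and "(LINT x:{0..r}|lborel. kerL a (r - x) * kerK a x) = 1"
proof -
  have dilate: "{x. 0 + r * x \<in> {0..r}} = {0..1}"
    using assms(3) by (auto simp: zero_le_mult_iff mult_le_cancel_left1)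
  have "kerL a (r - (0 + r * x)) * kerK a (0 + r * x)
      = (r powr - a * r powr (a - 1)) * (kerL a (1 - x) * kerK a x)" for x
    using kerL_scale[OF assms(3), of a "1 - x"] kerK_scale[OF assms(3), of a x]
    by (simp add: right_diff_distrib mult_ac)
  then have scale: "kerL a (r - (0 + r * x)) * kerK a (0 + r * x) = kerL a (1 - x) * kerK a x / r" for x
    using assms(3) by (simp add: powr_minus_mult_powr_pred)
  note affine = set_integral_real_affine[where c=r and t=0 and A="{0..r}"
      and f="\<lambda>x. kerL a (r - x) * kerK a x", unfolded dilate scale]
  note unit = set_integral_kerL_kerK_unit[OF assms(1,2)]
  show "set_integrable lborel {0..r} (\<lambda>x. kerL a (r - x) * kerK a x)"
    using affine(2) unit(1) assms(3) by simp
  show "(LINT x:{0..r}|lborel. kerL a (r - x) * kerK a x) = 1"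
    using affine(1) unit(2) assms(3) by simp
qed

section \<open>Scaling\<close>

lemma Kh_scale:
  assumes "0 < h"
  shows "Kh a h (h * w) (h * s) = h powr (a - 1) * Kh a 1 w s"
proof -
  have "phi h (h * w) = h * phi 1 w"
    using assms by (simp add: phi_def)
  then show ?thesis
    using assms by (simp add: Kh_def zero_le_mult_iff kerK_scale flip: right_diff_distrib)
qed

lemma gh_scale:
  assumes "0 < h"
  shows "gh a h (h * t) (h * s) = gh a 1 t s"
proof -
  have dilate: "{x. 0 + h * x \<in> {h * s..h * t}} = {s..t}"
    using assms by auto
  have "kerL a (h * t - (0 + h * x)) * Kh a h (0 + h * x) (h * s)
      = (h powr - a * h powr (a - 1)) * (kerL a (t - x) * Kh a 1 x s)" for x
    using kerL_scale[OF assms, of a "t - x"] Kh_scale[OF assms, of a x s]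
    by (simp add: right_diff_distrib mult_ac)
  then have scale: "kerL a (h * t - (0 + h * x)) * Kh a h (0 + h * x) (h * s)
      = kerL a (t - x) * Kh a 1 x s / h" for x
    using assms by (simp add: powr_minus_mult_powr_pred)
  show ?thesis
    using set_integral_real_affine(1)[where c=h and t=0 and A="{h * s..h * t}"
        and f="\<lambda>v. kerL a (h * t - v) * Kh a h v (h * s)", unfolded dilate scale] assms
    by (simp add: gh_def)
qed

lemma gh_eq_set_integral_shift:
  "gh a h t s = (LINT x:{0..t - s}|lborel. kerL a (t - s - x) * Kh a h (s + x) s)"
proof -
  have shift: "{x. s + 1 * x \<in> {s..t}} = {0..t - s}"
    by auto
  show ?thesis
    using set_integral_real_affine(1)[where c=1 and t=s and A="{s..t}"
        and f="\<lambda>v. kerL a (t - v) * Kh a h v s", unfolded shift]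
    by (simp add: gh_def diff_diff_eq)
qed

lemma set_integral_gh_scale:
  assumes "0 < h"
  shows "(LINT u:{0..t}|lborel. f (gh a h t u)) = h * (LINT u:{0..t / h}|lborel. f (gh a 1 (t / h) u))"
proof -
  have dilate: "{x. 0 + h * x \<in> {0..t}} = {0..t / h}"
    using assms by (auto simp: zero_le_mult_iff pos_le_divide_eq mult.commute)
  have "gh a h t (0 + h * x) = gh a 1 (t / h) x" for x
    using gh_scale[OF assms, of a "t / h" x] assms by simp
  then show ?thesis
    using set_integral_real_affine(1)[where c=h and t=0 and A="{0..t}"
        and f="\<lambda>u. f (gh a h t u)", unfolded dilate] assms
    by simp
qed

section \<open>Rounding error of the kernel\<close>

definition damped_powr :: "real \<Rightarrow> real \<Rightarrow> real" where
  "damped_powr a x = x powr (a - 1) / (1 + x)"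

lemma damped_powr_nonneg: "0 \<le> x \<Longrightarrow> 0 \<le> damped_powr a x"
  by (simp add: damped_powr_def)

lemma damped_powr_le_kerK:
  assumes "0 < a" "0 \<le> x"
  shows "damped_powr a x \<le> Gamma a * kerK a x"
proof -
  have "x powr (a - 1) / (1 + x) \<le> x powr (a - 1) / 1"
    using assms by (intro divide_left_mono) auto
  moreover have "Gamma a \<noteq> 0"
    using Gamma_real_pos[OF assms(1)] by simp
  ultimately show ?thesis
    using assms by (simp add: damped_powr_def kerK_eq_powr)
qed

lemma powr_le_damped_powr:
  assumes "a < 1" "0 \<le> x" "x < d" "d \<le> 1"
  shows "x powr (a - 1) \<le> 6 * d powr (a - 1) * damped_powr a x"
proof -
  have "x powr (a - 1) * (1 + x) \<le> x powr (a - 1) * 6"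
    using assms by (intro mult_left_mono) auto
  then have "x powr (a - 1) \<le> 6 * damped_powr a x"
    using assms by (simp add: damped_powr_def field_simps)
  also have "\<dots> \<le> 6 * d powr (a - 1) * damped_powr a x"
    using powr_mono2'[of "a - 1" d 1] assms damped_powr_nonneg[of x a]
    by (simp add: mult_right_mono)
  finally show ?thesis .
qed

lemma powr_pred_diff_le:
  fixes a x :: real
  assumes "0 \<le> a" "1 < x"
  shows "(x - 1) powr (a - 1) - x powr (a - 1) \<le> x powr (a - 1) / (x - 1)"
proof -
  have "(x - 1) powr (a - 1) * (x - 1) = (x - 1) powr a"
    using powr_add[of "x - 1" "a - 1" 1] assms by simp
  also have "\<dots> \<le> x powr a"
    using assms by (intro powr_mono2) auto
  also have "\<dots> = x powr (a - 1) * (x - 1) + x powr (a - 1)"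
    using assms by (simp add: powr_mult_base algebra_simps)
  finally show ?thesis
    using assms by (simp add: field_simps)
qed

lemma powr_diff_le_damped_powr:
  assumes "0 < a" "a < 1" "0 < d" "d \<le> 1" "d \<le> y" "y \<le> x" "x - 1 < y"
  shows "y powr (a - 1) - x powr (a - 1) \<le> 6 * d powr (a - 1) * damped_powr a x"
proof (cases "x \<le> 2")
  case True
  have "1 / 2 \<le> 2 powr (a - 1)"
    using powr_mono[of "-1" "a - 1" 2] assms by (simp add: powr_minus_divide)
  also have "\<dots> \<le> x powr (a - 1)"
    using True assms by (intro powr_mono2') auto
  finally have "1 \<le> 6 * damped_powr a x"
    using True assms by (simp add: damped_powr_def field_simps)
  have "y powr (a - 1) \<le> d powr (a - 1)"
    using assms by (intro powr_mono2') auto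
  then have "y powr (a - 1) - x powr (a - 1) \<le> d powr (a - 1)"
    using powr_ge_zero[of x "a - 1"] by linarith
  also have "\<dots> \<le> d powr (a - 1) * (6 * damped_powr a x)"
    using mult_left_mono[OF \<open>1 \<le> 6 * damped_powr a x\<close>, of "d powr (a - 1)"] by simp
  finally show ?thesis
    by (simp add: mult_ac)
next
  case False
  have "y powr (a - 1) - x powr (a - 1) \<le> (x - 1) powr (a - 1) - x powr (a - 1)"
    using False assms powr_mono2'[of "a - 1" "x - 1" y] by simp
  also have "\<dots> \<le> x powr (a - 1) / (x - 1)"
    using False assms by (intro powr_pred_diff_le) auto
  also have "\<dots> \<le> 6 * damped_powr a x"
    using False by (simp add: damped_powr_def field_simps)
  also have "\<dots> \<le> 6 * d powr (a - 1) * damped_powr a x"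
    using powr_mono2'[of "a - 1" d 1] assms damped_powr_nonneg[of x a] False
    by (simp add: mult_right_mono)
  finally show ?thesis .
qed

lemma abs_Kh1_minus_kerK_le:
  assumes "0 < a" "a < 1" "0 \<le> s" "0 \<le> x"
  shows "\<bar>Kh a 1 (s + x) s - kerK a x\<bar> \<le> 6 / Gamma a * (1 - frac s) powr (a - 1) * damped_powr a x"
proof -
  define d where "d = 1 - frac s"
  define m where "m = real_of_int \<lfloor>s + x\<rfloor>"
  have d: "0 < d" "d \<le> 1" "d = of_int \<lfloor>s\<rfloor> + 1 - s"
    using frac_lt_1[of s] by (auto simp: d_def frac_def)
  have "0 < Gamma a"
    using assms by (simp add: Gamma_real_pos)
  have Kh: "Kh a 1 (s + x) s = (if s < m then kerK a (m - s) else 0)"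
    using assms by (simp add: Kh_def phi_def m_def)
  show ?thesis
  proof (cases "s < m")
    case False
    then have "\<lfloor>s + x\<rfloor> \<le> \<lfloor>s\<rfloor>"
      by (simp add: m_def le_floor_iff)
    then have "x < d"
      using d(3) real_of_int_floor_add_one_gt[of "s + x"] by linarith
    then have "x powr (a - 1) \<le> 6 * d powr (a - 1) * damped_powr a x"
      using assms d by (intro powr_le_damped_powr) auto
    then show ?thesis
      using False assms \<open>0 < Gamma a\<close>
      by (simp add: Kh kerK_eq_powr d_def divide_right_mono)
  next
    case True
    then have "\<lfloor>s\<rfloor> < \<lfloor>s + x\<rfloor>"
      by (simp add: m_def floor_less_iff)
    then have "d \<le> m - s"
      using d(3) by (simp add: m_def flip: of_int_less_iff)
    have "m - s \<le> x" "x - 1 < m - s"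
      unfolding m_def using of_int_floor_le[of "s + x"] real_of_int_floor_add_one_gt[of "s + x"]
      by linarith+
    have "kerK a x \<le> kerK a (m - s)"
      using \<open>0 < d\<close> \<open>d \<le> m - s\<close> \<open>m - s \<le> x\<close> assms by (intro kerK_antimono) auto
    then have "\<bar>Kh a 1 (s + x) s - kerK a x\<bar> = ((m - s) powr (a - 1) - x powr (a - 1)) / Gamma a"
      using True \<open>0 < d\<close> \<open>d \<le> m - s\<close> assms by (simp add: Kh kerK_def diff_divide_distrib)
    also have "\<dots> \<le> 6 * d powr (a - 1) * damped_powr a x / Gamma a"
      using assms d(1,2) \<open>d \<le> m - s\<close> \<open>m - s \<le> x\<close> \<open>x - 1 < m - s\<close> \<open>0 < Gamma a\<close>
      by (intro divide_right_mono powr_diff_le_damped_powr) auto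
    finally show ?thesis
      by (simp add: d_def)
  qed
qed

section \<open>Convolution of L with the damped power\<close>

definition broken_powr :: "real \<Rightarrow> real \<Rightarrow> real" where
  "broken_powr a x = (if x \<le> 1 then x powr (a - 1) else x powr (a - 2))"

lemma broken_powr_nonneg: "0 \<le> broken_powr a x"
  by (simp add: broken_powr_def)

lemma damped_powr_le_broken_powr:
  assumes "0 \<le> x"
  shows "damped_powr a x \<le> broken_powr a x"
proof (cases "x \<le> 1")
  case True
  have "x powr (a - 1) / (1 + x) \<le> x powr (a - 1) / 1"
    using assms by (intro divide_left_mono) auto
  then show ?thesis
    using True by (simp add: damped_powr_def broken_powr_def)
next
  case False
  then have "x powr (a - 1) / (1 + x) \<le> x powr (a - 1) / x"
    by (intro divide_left_mono) auto
  also have "\<dots> = x powr (a - 2)"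
    using False powr_diff[of x "a - 1" 1] by simp
  finally show ?thesis
    using False by (simp add: damped_powr_def broken_powr_def)
qed

lemma set_integral_broken_powr:
  assumes "0 < a" "a < 1" "1 \<le> r"
  shows "set_integrable lborel {0..r} (broken_powr a)"
    and "(LINT x:{0..r}|lborel. broken_powr a x) \<le> 1 / a + 1 / (1 - a)"
proof -
  have "((\<lambda>x. x powr (a - 1)) has_integral 1 / a) {0..1}"
    using has_integral_powr_from_0[of "a - 1" 1] assms by simp
  then have head: "(broken_powr a has_integral 1 / a) {0..1}"
    by (rule has_integral_eq[rotated]) (simp add: broken_powr_def)
  have tail_value: "(r powr (a - 2 + 1) - 1) / (a - 2 + 1) = (1 - r powr (a - 1)) / (1 - a)"
    using assms by (simp add: field_simps)
  have "((\<lambda>x. x powr (a - 2)) has_integral (1 - r powr (a - 1)) / (1 - a)) {1..r}"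
    unfolding tail_value[symmetric] using assms by (intro has_integral_powr_from_1) auto
  then have tail: "(broken_powr a has_integral (1 - r powr (a - 1)) / (1 - a)) {1..r}"
    by (rule has_integral_eq[rotated]) (auto simp: broken_powr_def minus_divide_divide[symmetric])
  note broken = has_integral_nonneg_imp_set_lborel[OF has_integral_combine[OF _ assms(3) head tail]]
  have [measurable]: "broken_powr a \<in> borel_measurable borel"
    unfolding broken_powr_def by measurable
  show "set_integrable lborel {0..r} (broken_powr a)"
    using broken broken_powr_nonneg by simp
  have "0 \<le> r powr (a - 1) / (1 - a)"
    using assms by simp
  then show "(LINT x:{0..r}|lborel. broken_powr a x) \<le> 1 / a + 1 / (1 - a)"
    using broken broken_powr_nonneg by (simp add: diff_divide_distrib)
qed

lemma set_integral_kerL_damped_powr_le_Gamma: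
  assumes "0 < a" "a < 1" "0 < r"
  shows "set_integrable lborel {0..r} (\<lambda>x. kerL a (r - x) * damped_powr a x)"
    and "(LINT x:{0..r}|lborel. kerL a (r - x) * damped_powr a x) \<le> Gamma a"
proof -
  have le: "\<bar>kerL a (r - x) * damped_powr a x\<bar> \<le> Gamma a * (kerL a (r - x) * kerK a x)"
    if "x \<in> {0..r}" for x
  proof -
    have "kerL a (r - x) * damped_powr a x \<le> kerL a (r - x) * (Gamma a * kerK a x)"
      using that assms by (intro mult_left_mono damped_powr_le_kerK kerL_nonneg) auto
    then show ?thesis
      using that assms kerL_nonneg[of a "r - x"] damped_powr_nonneg[of x a]
      by (simp add: abs_mult mult_ac)
  qed
  have meas: "set_borel_measurable lborel {0..r} (\<lambda>x. kerL a (r - x) * damped_powr a x)"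
    unfolding set_borel_measurable_def kerL_def damped_powr_def by measurable
  have "set_integrable lborel {0..r} (\<lambda>x. Gamma a * (kerL a (r - x) * kerK a x))"
    using set_integral_kerL_kerK(1)[OF assms] by simp
  note bound = abs_set_integral_le[OF this meas le]
  show "set_integrable lborel {0..r} (\<lambda>x. kerL a (r - x) * damped_powr a x)"
    by (rule bound(1))
  show "(LINT x:{0..r}|lborel. kerL a (r - x) * damped_powr a x) \<le> Gamma a"
    using bound(2) set_integral_kerL_kerK(2)[OF assms] by simp
qed

lemma powr_neg_le_of_ge_third:
  fixes e y R :: real
  assumes "0 \<le> e" "e \<le> 2" "0 < R" "R / 3 \<le> y"
  shows "y powr - e \<le> 9 * R powr - e"
proof -
  have "y powr - e \<le> (R / 3) powr - e"
    using assms by (intro powr_mono2') auto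
  also have "\<dots> = 3 powr e * R powr - e"
    using assms by (simp add: powr_divide powr_minus_divide)
  also have "\<dots> \<le> 9 * R powr - e"
    using powr_mono[of e 2 3] assms by (simp add: mult_right_mono)
  finally show ?thesis .
qed

lemma kerL_damped_powr_le_majorant:
  assumes "0 < a" "a < 1" "2 \<le> r" "0 \<le> x" "x \<le> r"
  shows "kerL a (r - x) * damped_powr a x
    \<le> 9 * ((1 + r) powr - a * broken_powr a x + (1 + r) powr (a - 2) * (r - x) powr - a) / Gamma (1 - a)"
    (is "_ \<le> 9 * (?near + ?far) / _")
proof -
  have "0 \<le> ?near" "0 \<le> ?far"
    by (simp_all add: broken_powr_nonneg)
  have "(r - x) powr - a * damped_powr a x \<le> 9 * (?near + ?far)"
  proof (cases "x \<le> r / 2")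
    case True
    have "(r - x) powr - a \<le> 9 * (1 + r) powr - a"
      using True assms by (intro powr_neg_le_of_ge_third) auto
    then have "(r - x) powr - a * damped_powr a x \<le> (9 * (1 + r) powr - a) * broken_powr a x"
      using assms damped_powr_le_broken_powr[of x a] by (intro mult_mono) (auto simp: damped_powr_nonneg)
    then show ?thesis
      using \<open>0 \<le> ?far\<close> unfolding distrib_left mult.assoc by linarith
  next
    case False
    then have "1 < x"
      using assms by simp
    have "damped_powr a x \<le> x powr - (2 - a)"
      using damped_powr_le_broken_powr[of x a] \<open>1 < x\<close> by (simp add: broken_powr_def)
    also have "\<dots> \<le> 9 * (1 + r) powr - (2 - a)"
      using False assms by (intro powr_neg_le_of_ge_third) auto
    finally have "(r - x) powr - a * damped_powr a x \<le> (r - x) powr - a * (9 * (1 + r) powr (a - 2))"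
      by (simp add: mult_left_mono)
    then show ?thesis
      using \<open>0 \<le> ?near\<close> unfolding distrib_left by (simp add: mult_ac)
  qed
  then show ?thesis
    using assms by (simp add: kerL_eq_powr divide_right_mono Gamma_real_pos)
qed

lemma set_integral_kerL_damped_powr_le_large:
  assumes "0 < a" "a < 1" "2 \<le> r"
  shows "(LINT x:{0..r}|lborel. kerL a (r - x) * damped_powr a x)
    \<le> 9 * (1 / a + 2 / (1 - a)) / Gamma (1 - a) * (1 + r) powr - a"
proof -
  define R where "R = 1 + r"
  note broken = set_integral_broken_powr[of a r]
  note reflected = set_integral_powr_reflected[of "- a" r]
  have "(LINT x:{0..r}|lborel. kerL a (r - x) * damped_powr a x)
      \<le> (LINT x:{0..r}|lborel. 9 * (R powr - a * broken_powr a x + R powr (a - 2) * (r - x) powr - a)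
            / Gamma (1 - a))"
    using assms broken(1) reflected(1) kerL_damped_powr_le_majorant[of a r] broken_powr_nonneg
    by (intro set_integral_mono' set_integrable_divide set_integrable_mult_right set_integral_add)
       (auto simp: R_def Gamma_real_pos)
  also have "\<dots> = 9 * (R powr - a * (LINT x:{0..r}|lborel. broken_powr a x)
      + R powr (a - 2) * (r powr (1 - a) / (1 - a))) / Gamma (1 - a)"
    using assms broken(1) reflected by (simp add: set_integral_add set_integrable_mult_right)
  also have "\<dots> \<le> 9 * (R powr - a * (1 / a + 1 / (1 - a)) + R powr - a / (1 - a)) / Gamma (1 - a)"
  proof -
    have "R powr (a - 2) * r powr (1 - a) \<le> R powr (a - 2) * R powr (1 - a)"
      using assms by (intro mult_left_mono powr_mono2) (auto simp: R_def)
    also have "\<dots> \<le> R powr - a"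
      using powr_mono[of "-1" "- a" R] assms by (simp add: R_def flip: powr_add)
    finally show ?thesis
      using assms broken(2)
      by (intro divide_right_mono mult_left_mono add_mono) (auto simp: Gamma_real_pos divide_right_mono)
  qed
  also have "\<dots> = 9 * (1 / a + 2 / (1 - a)) / Gamma (1 - a) * R powr - a"
    by (simp add: field_simps)
  finally show ?thesis
    by (simp add: R_def)
qed

lemma set_integral_kerL_damped_powr_le:
  assumes "0 < a" "a < 1"
  obtains C where "0 < C"
    and "\<And>r. 0 < r \<Longrightarrow> (LINT x:{0..r}|lborel. kerL a (r - x) * damped_powr a x) \<le> C * (1 + r) powr - a"
proof
  define B where "B = 9 * (1 / a + 2 / (1 - a)) / Gamma (1 - a)"
  have "0 < Gamma a" "0 \<le> B"
    using assms by (simp_all add: B_def Gamma_real_pos)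
  then show "0 < 9 * Gamma a + B"
    by simp
  fix r :: real
  assume "0 < r"
  have "0 \<le> B * (1 + r) powr - a" "0 \<le> Gamma a * (1 + r) powr - a"
    using \<open>0 \<le> B\<close> \<open>0 < Gamma a\<close> by simp_all
  show "(LINT x:{0..r}|lborel. kerL a (r - x) * damped_powr a x) \<le> (9 * Gamma a + B) * (1 + r) powr - a"
  proof (cases "r \<le> 2")
    case True
    have "1 \<le> 9 * (1 + r) powr - a"
      using powr_neg_le_of_ge_third[of a "1 + r" 1] True assms \<open>0 < r\<close> by simp
    then have "Gamma a \<le> 9 * Gamma a * (1 + r) powr - a"
      using mult_left_mono[of 1 _ "Gamma a"] \<open>0 < Gamma a\<close> by (simp add: mult_ac)
    then show ?thesis
      using set_integral_kerL_damped_powr_le_Gamma(2)[OF assms \<open>0 < r\<close>] \<open>0 \<le> B * (1 + r) powr - a\<close>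
      by (simp add: distrib_right)
  next
    case False
    then show ?thesis
      using set_integral_kerL_damped_powr_le_large[OF assms, of r] \<open>0 \<le> Gamma a * (1 + r) powr - a\<close>
      by (simp add: B_def distrib_right)
  qed
qed

section \<open>Pointwise bound on the error of g^(1)\<close>

lemma abs_gh1_minus_1_le_convolution:
  assumes "0 < a" "a < 1" "0 \<le> s" "0 < r"
  shows "\<bar>gh a 1 (s + r) s - 1\<bar>
    \<le> 6 / Gamma a * (1 - frac s) powr (a - 1) * (LINT x:{0..r}|lborel. kerL a (r - x) * damped_powr a x)"
proof -
  define c where "c = 6 / Gamma a * (1 - frac s) powr (a - 1)"
  define D where "D = (\<lambda>x. kerL a (r - x) * (Kh a 1 (s + x) s - kerK a x))"
  have D_le: "\<bar>D x\<bar> \<le> c * (kerL a (r - x) * damped_powr a x)" if "x \<in> {0..r}" for x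
  proof -
    have "\<bar>D x\<bar> = kerL a (r - x) * \<bar>Kh a 1 (s + x) s - kerK a x\<bar>"
      using assms by (simp add: D_def abs_mult kerL_nonneg)
    also have "\<dots> \<le> kerL a (r - x) * (c * damped_powr a x)"
      using that assms unfolding c_def by (intro mult_left_mono abs_Kh1_minus_kerK_le kerL_nonneg) auto
    finally show ?thesis
      by (simp add: mult_ac)
  qed
  have majorant: "set_integrable lborel {0..r} (\<lambda>x. c * (kerL a (r - x) * damped_powr a x))"
    using set_integral_kerL_damped_powr_le_Gamma(1)[OF assms(1,2,4)] by simp
  have "set_borel_measurable lborel {0..r} D"
    unfolding set_borel_measurable_def D_def kerL_def Kh_def phi_def kerK_def by measurable
  note D = abs_set_integral_le[OF majorant this D_le]
  have "gh a 1 (s + r) s = (LINT x:{0..r}|lborel. kerL a (r - x) * kerK a x + D x)"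
    by (simp add: gh_eq_set_integral_shift D_def algebra_simps)
  also have "\<dots> = 1 + (LINT x:{0..r}|lborel. D x)"
    using set_integral_add(2)[OF set_integral_kerL_kerK(1)[OF assms(1,2,4)] D(1)]
      set_integral_kerL_kerK(2)[OF assms(1,2,4)] by simp
  finally have "\<bar>gh a 1 (s + r) s - 1\<bar> = \<bar>LINT x:{0..r}|lborel. D x\<bar>"
    by simp
  also have "\<dots> \<le> c * (LINT x:{0..r}|lborel. kerL a (r - x) * damped_powr a x)"
    using D(2) by simp
  finally show ?thesis
    by (simp add: c_def)
qed

lemma gh_diagonal: "gh a h t t = 0"
proof -
  have "AE v in lborel. indicator {t..t} v *\<^sub>R (kerL a (t - v) * Kh a h v t) = (0::real)"
    using AE_lborel_singleton[of t] by eventually_elim auto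
  then show ?thesis
    by (simp add: gh_def set_lebesgue_integral_def integral_eq_zero_AE)
qed

lemma one_le_one_minus_frac_powr:
  fixes a s :: real
  shows "a \<le> 1 \<Longrightarrow> 1 \<le> (1 - frac s) powr (a - 1)"
  using frac_lt_1[of s] powr_mono2'[of "a - 1" "1 - frac s" 1] by simp

lemma abs_gh1_minus_1_le:
  assumes "0 < a" "a < 1"
  obtains C where "0 < C"
    and "\<And>s t. 0 \<le> s \<Longrightarrow> s \<le> t \<Longrightarrow>
      \<bar>gh a 1 t s - 1\<bar> \<le> C * (1 - frac s) powr (a - 1) * (1 + (t - s)) powr - a"
proof -
  obtain CJ where "0 < CJ" and CJ: "\<And>r. 0 < r \<Longrightarrow>
      (LINT x:{0..r}|lborel. kerL a (r - x) * damped_powr a x) \<le> CJ * (1 + r) powr - a"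
    using set_integral_kerL_damped_powr_le[OF assms] by blast
  define C where "C = 1 + 6 / Gamma a * CJ"
  have "0 < Gamma a"
    using assms by (simp add: Gamma_real_pos)
  then have "1 \<le> C"
    using \<open>0 < CJ\<close> by (simp add: C_def)
  have shifted: "\<bar>gh a 1 (s + r) s - 1\<bar> \<le> C * (1 - frac s) powr (a - 1) * (1 + r) powr - a"
    if "0 \<le> s" "0 \<le> r" for s r
  proof (cases "r = 0")
    case True
    then show ?thesis
      using mult_mono[OF \<open>1 \<le> C\<close> one_le_one_minus_frac_powr[of a s]] \<open>1 \<le> C\<close> assms
      by (simp add: gh_diagonal)
  next
    case False
    have "\<bar>gh a 1 (s + r) s - 1\<bar>
        \<le> 6 / Gamma a * (1 - frac s) powr (a - 1) * (LINT x:{0..r}|lborel. kerL a (r - x) * damped_powr a x)"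
      using False that assms by (intro abs_gh1_minus_1_le_convolution) auto
    also have "\<dots> \<le> 6 / Gamma a * (1 - frac s) powr (a - 1) * (CJ * (1 + r) powr - a)"
      using CJ[of r] False that \<open>0 < Gamma a\<close> by (intro mult_left_mono) auto
    also have "\<dots> = 6 / Gamma a * CJ * ((1 - frac s) powr (a - 1) * (1 + r) powr - a)"
      by (simp add: mult_ac)
    also have "\<dots> \<le> C * ((1 - frac s) powr (a - 1) * (1 + r) powr - a)"
      by (rule mult_right_mono) (simp_all add: C_def)
    finally show ?thesis
      by (simp add: mult_ac)
  qed
  have "\<bar>gh a 1 t s - 1\<bar> \<le> C * (1 - frac s) powr (a - 1) * (1 + (t - s)) powr - a"
    if "0 \<le> s" "s \<le> t" for s t
    using shifted[of s "t - s"] that by simp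
  moreover have "0 < C"
    using \<open>1 \<le> C\<close> by simp
  ultimately show ?thesis
    using that by blast
qed

section \<open>Integrating the singularity at the integers\<close>

lemma set_integral_one_minus_frac_powr_cell:
  fixes G :: "real \<Rightarrow> real" and j :: nat
  assumes "-1 < b" and [measurable]: "G \<in> borel_measurable borel"
    and G: "\<And>s. s \<in> {real j..<real j + 1} \<Longrightarrow> 0 \<le> G s \<and> G s \<le> M"
  shows "set_integrable lborel {real j..<real j + 1} (\<lambda>s. (1 - frac s) powr b * G s)"
    and "(LINT s:{real j..<real j + 1}|lborel. (1 - frac s) powr b * G s) \<le> M / (1 + b)"
proof -
  have shift: "{x. real j + 1 * x \<in> {real j..<real j + 1}} = {0..<1}"
    by auto
  have frac: "frac (real j + x) = x" if "x \<in> {0..<1}" for x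
    using that by (simp add: frac_def floor_eq_iff)
  have "0 \<le> M"
    using G[of "real j"] by simp
  note reflected = set_integral_powr_reflected[OF assms(1) zero_le_one]
  have "set_integrable lborel {0..<1} (\<lambda>x. (1 - x) powr b)"
    by (rule set_integrable_subset[OF reflected(1)]) auto
  then have majorant: "set_integrable lborel {0..<1} (\<lambda>x. M * (1 - x) powr b)"
    by simp
  have le: "\<bar>(1 - frac (real j + 1 * x)) powr b * G (real j + 1 * x)\<bar> \<le> M * (1 - x) powr b"
    if "x \<in> {0..<1}" for x
  proof -
    have "(1 - x) powr b * G (real j + x) \<le> (1 - x) powr b * M"
      using that G[of "real j + x"] by (intro mult_left_mono) auto
    then show ?thesis
      using that G[of "real j + x"] by (simp add: frac abs_mult mult.commute)
  qed
  have "set_borel_measurable lborel {0..<1} (\<lambda>x. (1 - frac (real j + 1 * x)) powr b * G (real j + 1 * x))"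
    unfolding set_borel_measurable_def frac_def by measurable
  note cell = abs_set_integral_le[OF majorant this le]
  note affine = set_integral_real_affine[where c=1 and t="real j" and A="{real j..<real j + 1}"
      and f="\<lambda>s. (1 - frac s) powr b * G s", unfolded shift]
  show "set_integrable lborel {real j..<real j + 1} (\<lambda>s. (1 - frac s) powr b * G s)"
    using affine(2) cell(1) by simp
  have "(LINT s:{real j..<real j + 1}|lborel. (1 - frac s) powr b * G s)
      \<le> (LINT x:{0..<1}|lborel. M * (1 - x) powr b)"
    using affine(1) cell(2) by simp
  also have "\<dots> \<le> (LINT x:{0..1}|lborel. M * (1 - x) powr b)"
    using reflected(1) \<open>0 \<le> M\<close> by (intro set_integral_mono_set_nonneg) auto
  also have "\<dots> = M / (1 + b)"
    using reflected(2) assms by (simp add: add.commute)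
  finally show "(LINT s:{real j..<real j + 1}|lborel. (1 - frac s) powr b * G s) \<le> M / (1 + b)" .
qed

lemma set_integral_one_minus_frac_powr_le_sum:
  fixes G :: "real \<Rightarrow> real" and N :: nat
  assumes "-1 < b" "G \<in> borel_measurable borel"
    and nonneg: "\<And>s. s \<in> {0..real N} \<Longrightarrow> 0 \<le> G s" and mono: "mono_on {0..real N} G"
  shows "set_integrable lborel {0..<real N} (\<lambda>s. (1 - frac s) powr b * G s)"
    and "(LINT s:{0..<real N}|lborel. (1 - frac s) powr b * G s) \<le> (\<Sum>j<N. G (real j + 1)) / (1 + b)"
proof -
  define A where "A j = {real j..<real j + 1}" for j :: nat
  have "0 \<le> G s \<and> G s \<le> G (real j + 1)" if "j < N" "s \<in> A j" for j s
    using that nonneg[of s] mono_onD[OF mono, of s "real j + 1"] by (auto simp: A_def)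
  then have cells: "set_integrable lborel (A j) (\<lambda>s. (1 - frac s) powr b * G s)"
    "(LINT s:A j|lborel. (1 - frac s) powr b * G s) \<le> G (real j + 1) / (1 + b)" if "j < N" for j
    using that assms(1,2) unfolding A_def by (blast intro: set_integral_one_minus_frac_powr_cell)+
  have floor: "\<lfloor>s\<rfloor> = int j" if "s \<in> A j" for s j
    using that by (simp add: A_def floor_eq_iff)
  have union: "{0..<real N} = (\<Union>j<N. A j)"
  proof (intro equalityI subsetI)
    fix s
    assume "s \<in> {0..<real N}"
    then have "nat \<lfloor>s\<rfloor> < N" "s \<in> A (nat \<lfloor>s\<rfloor>)"
      by (auto simp: A_def nat_less_iff floor_less_iff)
    then show "s \<in> (\<Union>j<N. A j)"
      by blast
  qed (auto simp: A_def)
  have "disjoint_family_on A {..<N}"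
    by (force simp: disjoint_family_on_def dest: floor)
  have sets: "A j \<in> sets lborel" for j
    by (simp add: A_def)
  show "set_integrable lborel {0..<real N} (\<lambda>s. (1 - frac s) powr b * G s)"
    unfolding union using cells sets by (intro set_integrable_UN) auto
  have "(LINT s:{0..<real N}|lborel. (1 - frac s) powr b * G s)
      = (\<Sum>j<N. LINT s:A j|lborel. (1 - frac s) powr b * G s)"
    unfolding union using cells sets \<open>disjoint_family_on A {..<N}\<close>
    by (intro set_integral_finite_Union) auto
  also have "\<dots> \<le> (\<Sum>j<N. G (real j + 1) / (1 + b))"
    using cells by (intro sum_mono) auto
  finally show "(LINT s:{0..<real N}|lborel. (1 - frac s) powr b * G s) \<le> (\<Sum>j<N. G (real j + 1)) / (1 + b)"
    by (simp add: sum_divide_distrib)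
qed

lemma sum_one_plus_max_powr_le:
  fixes p t :: real
  assumes "0 \<le> p" "real N \<le> t + 1"
  shows "(\<Sum>j<N. (1 + max (t - (real j + 1)) 0) powr - p) \<le> 2 powr p * (\<Sum>k<N. (real k + 1) powr - p)"
proof -
  have "(1 + max (t - (real j + 1)) 0) powr - p \<le> 2 powr p * (real (N - Suc j) + 1) powr - p"
    if "j < N" for j
  proof -
    have "(real (N - Suc j) + 1) / 2 \<le> 1 + max (t - (real j + 1)) 0"
      using that assms by (auto simp: of_nat_diff max_def)
    then have "(1 + max (t - (real j + 1)) 0) powr - p \<le> ((real (N - Suc j) + 1) / 2) powr - p"
      using assms by (intro powr_mono2') auto
    then show ?thesis
      by (simp add: powr_divide powr_minus_divide)
  qed
  then have "(\<Sum>j<N. (1 + max (t - (real j + 1)) 0) powr - p)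
      \<le> (\<Sum>j<N. 2 powr p * (real (N - Suc j) + 1) powr - p)"
    by (intro sum_mono) auto
  also have "\<dots> = 2 powr p * (\<Sum>j<N. (real (N - Suc j) + 1) powr - p)"
    by (simp only: sum_distrib_left)
  also have "(\<Sum>j<N. (real (N - Suc j) + 1) powr - p) = (\<Sum>k<N. (real k + 1) powr - p)"
    by (rule sum.nat_diff_reindex)
  finally show ?thesis .
qed

lemma set_integral_one_minus_frac_powr_decay:
  fixes b p t :: real
  assumes "0 \<le> t" "-1 < b" "0 \<le> p"
  shows "set_integrable lborel {0..t} (\<lambda>s. (1 - frac s) powr b * (1 + (t - s)) powr - p)"
    and "(LINT s:{0..t}|lborel. (1 - frac s) powr b * (1 + (t - s)) powr - p)
      \<le> 2 powr p / (1 + b) * (\<Sum>k<nat \<lfloor>t\<rfloor> + 1. (real k + 1) powr - p)"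
proof -
  define N where "N = nat \<lfloor>t\<rfloor> + 1"
  \<comment> \<open>the cut-off at t keeps G nondecreasing on the last cell, which may reach beyond t\<close>
  define G where "G = (\<lambda>s. (1 + max (t - s) 0) powr - p)"
  have N: "t < real N" "real N \<le> t + 1"
    using assms(1) by (simp_all add: N_def) linarith+
  have meas: "G \<in> borel_measurable borel"
    unfolding G_def by measurable
  have mono: "mono_on {0..real N} G"
    using assms(3) by (intro mono_onI) (auto simp: G_def intro!: powr_mono2')
  have nonneg: "0 \<le> G s" for s
    by (simp add: G_def)
  note sum = set_integral_one_minus_frac_powr_le_sum[where G=G and N=N, OF assms(2) meas nonneg mono]
  have eq: "(1 - frac s) powr b * (1 + (t - s)) powr - p = (1 - frac s) powr b * G s" if "s \<le> t" for s
    using that by (simp add: G_def)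
  have sub: "{0..t} \<subseteq> {0..<real N}"
    using N by auto
  have "set_integrable lborel {0..t} (\<lambda>s. (1 - frac s) powr b * G s)"
    by (rule set_integrable_subset[OF sum(1) _ sub]) auto
  then show "set_integrable lborel {0..t} (\<lambda>s. (1 - frac s) powr b * (1 + (t - s)) powr - p)"
    by (subst set_integrable_cong[OF refl refl eq]) auto
  have "(LINT s:{0..t}|lborel. (1 - frac s) powr b * (1 + (t - s)) powr - p)
      = (LINT s:{0..t}|lborel. (1 - frac s) powr b * G s)"
    using eq by (intro set_lebesgue_integral_cong) auto
  also have "\<dots> \<le> (LINT s:{0..<real N}|lborel. (1 - frac s) powr b * G s)"
    using sum(1) sub by (intro set_integral_mono_set_nonneg) (auto simp: G_def)
  also have "\<dots> \<le> (\<Sum>j<N. G (real j + 1)) / (1 + b)"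
    by (rule sum(2))
  also have "\<dots> \<le> 2 powr p * (\<Sum>k<N. (real k + 1) powr - p) / (1 + b)"
    unfolding G_def using assms N by (intro divide_right_mono sum_one_plus_max_powr_le) auto
  finally show "(LINT s:{0..t}|lborel. (1 - frac s) powr b * (1 + (t - s)) powr - p)
      \<le> 2 powr p / (1 + b) * (\<Sum>k<nat \<lfloor>t\<rfloor> + 1. (real k + 1) powr - p)"
    by (simp add: N_def)
qed

section \<open>Power sums\<close>

lemma powr_succ_le_diff_quotient:
  fixes p x :: real
  assumes "0 < x" "0 < p" "p \<noteq> 1"
  shows "(x + 1) powr - p \<le> ((x + 1) powr (1 - p) - x powr (1 - p)) / (1 - p)"
proof -
  have "\<exists>z. x < z \<and> z < x + 1 \<and>
      (x + 1) powr (1 - p) - x powr (1 - p) = (x + 1 - x) * ((1 - p) * z powr (1 - p - 1))"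
    by (rule MVT2) (use assms in \<open>auto intro!: derivative_eq_intros\<close>)
  then obtain z where z: "x < z" "z < x + 1"
    and mvt: "(x + 1) powr (1 - p) - x powr (1 - p) = (1 - p) * z powr - p"
    by auto
  have "(x + 1) powr - p \<le> z powr - p"
    using z assms by (intro powr_mono2') auto
  then show ?thesis
    using assms by (simp add: mvt)
qed

lemma sum_succ_powr_neg_le:
  fixes p :: real
  assumes "0 < p" "p \<noteq> 1" "1 \<le> N"
  shows "(\<Sum>k<N. (real k + 1) powr - p) \<le> 1 + (real N powr (1 - p) - 1) / (1 - p)"
  using assms(3)
proof (induction N rule: dec_induct)
  case (step N)
  have "(\<Sum>k<Suc N. (real k + 1) powr - p) = (\<Sum>k<N. (real k + 1) powr - p) + (real N + 1) powr - p"
    by simp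
  also have "\<dots> \<le> 1 + (real N powr (1 - p) - 1) / (1 - p)
      + ((real N + 1) powr (1 - p) - real N powr (1 - p)) / (1 - p)"
    using step assms by (intro add_mono powr_succ_le_diff_quotient) auto
  also have "\<dots> = 1 + (real (Suc N) powr (1 - p) - 1) / (1 - p)"
    by (simp add: diff_divide_distrib add.commute)
  finally show ?case .
qed simp

lemma sum_succ_powr_neg_le_sublinear:
  fixes p :: real
  assumes "0 < p" "p < 1"
  shows "(\<Sum>k<N. (real k + 1) powr - p) \<le> real N powr (1 - p) / (1 - p)"
proof (cases "N = 0")
  case False
  have "(\<Sum>k<N. (real k + 1) powr - p) \<le> 1 + (real N powr (1 - p) - 1) / (1 - p)"
    using False assms by (intro sum_succ_powr_neg_le) auto
  also have "\<dots> \<le> real N powr (1 - p) / (1 - p)"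
    using assms by (simp add: diff_divide_distrib)
  finally show ?thesis .
qed simp

lemma sum_succ_powr_neg_le_bounded:
  fixes p :: real
  assumes "1 < p"
  shows "(\<Sum>k<N. (real k + 1) powr - p) \<le> p / (p - 1)"
proof (cases "N = 0")
  case False
  have "(real N powr (1 - p) - 1) / (1 - p) = (1 - real N powr (1 - p)) / (p - 1)"
    using assms by (simp add: field_simps)
  also have "\<dots> \<le> 1 / (p - 1)"
    using assms by (intro divide_right_mono) auto
  finally have "(real N powr (1 - p) - 1) / (1 - p) \<le> 1 / (p - 1)" .
  moreover have "1 + 1 / (p - 1) = p / (p - 1)"
    using assms by (simp add: field_simps)
  ultimately show ?thesis
    using sum_succ_powr_neg_le[of p N] False assms by simp
qed (use assms in simp)

section \<open>The integrated error\<close>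

lemma abs_gh1_minus_1_power_le:
  assumes "0 < a" "a < 1"
  obtains C where "0 < C"
    and "\<And>s t. 0 \<le> s \<Longrightarrow> s \<le> t \<Longrightarrow> \<bar>gh a 1 t s - 1\<bar> ^ n
      \<le> C * ((1 - frac s) powr (real n * (a - 1)) * (1 + (t - s)) powr - (real n * a))"
proof -
  obtain C where "0 < C" and C: "\<And>s t. 0 \<le> s \<Longrightarrow> s \<le> t \<Longrightarrow>
      \<bar>gh a 1 t s - 1\<bar> \<le> C * (1 - frac s) powr (a - 1) * (1 + (t - s)) powr - a"
    using abs_gh1_minus_1_le[OF assms] by blast
  have "\<bar>gh a 1 t s - 1\<bar> ^ n
      \<le> C ^ n * ((1 - frac s) powr (real n * (a - 1)) * (1 + (t - s)) powr - (real n * a))"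
    if "0 \<le> s" "s \<le> t" for s t
  proof -
    have "0 < 1 - frac s" "0 < 1 + (t - s)"
      using that frac_lt_1[of s] by auto
    have "\<bar>gh a 1 t s - 1\<bar> ^ n \<le> (C * (1 - frac s) powr (a - 1) * (1 + (t - s)) powr - a) ^ n"
      using that C[of s t] by (intro power_mono) auto
    also have "\<dots> = C ^ n * ((1 - frac s) powr (real n * (a - 1)) * (1 + (t - s)) powr - (real n * a))"
      using \<open>0 < 1 - frac s\<close> \<open>0 < 1 + (t - s)\<close> by (simp add: power_mult_distrib powr_power)
    finally show ?thesis .
  qed
  with \<open>0 < C\<close> show ?thesis
    using that[of "C ^ n"] by simp
qed

lemma set_integral_abs_gh1_minus_1_power_le:
  assumes "0 < a" "a < 1" "real n * (1 - a) < 1"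
  obtains C where "0 < C"
    and "\<And>t. 0 \<le> t \<Longrightarrow> (LINT u:{0..t}|lborel. \<bar>gh a 1 t u - 1\<bar> ^ n)
      \<le> C * (\<Sum>k<nat \<lfloor>t\<rfloor> + 1. (real k + 1) powr - (real n * a))"
proof -
  define b where "b = real n * (a - 1)"
  define p where "p = real n * a"
  obtain C where "0 < C" and C: "\<And>s t. 0 \<le> s \<Longrightarrow> s \<le> t \<Longrightarrow>
      \<bar>gh a 1 t s - 1\<bar> ^ n \<le> C * ((1 - frac s) powr b * (1 + (t - s)) powr - p)"
    unfolding b_def p_def using abs_gh1_minus_1_power_le[OF assms(1,2)] by blast
  have "-1 < b" "0 \<le> p"
    using assms by (simp_all add: b_def p_def algebra_simps)
  have "(LINT u:{0..t}|lborel. \<bar>gh a 1 t u - 1\<bar> ^ n)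
      \<le> C * 2 powr p / (1 + b) * (\<Sum>k<nat \<lfloor>t\<rfloor> + 1. (real k + 1) powr - p)" if "0 \<le> t" for t
  proof -
    note decay = set_integral_one_minus_frac_powr_decay[OF that \<open>-1 < b\<close> \<open>0 \<le> p\<close>]
    have "(LINT u:{0..t}|lborel. \<bar>gh a 1 t u - 1\<bar> ^ n)
        \<le> (LINT u:{0..t}|lborel. C * ((1 - frac u) powr b * (1 + (t - u)) powr - p))"
      using decay(1) C \<open>0 < C\<close> by (intro set_integral_mono') auto
    also have "\<dots> = C * (LINT u:{0..t}|lborel. (1 - frac u) powr b * (1 + (t - u)) powr - p)"
      by simp
    also have "\<dots> \<le> C * (2 powr p / (1 + b) * (\<Sum>k<nat \<lfloor>t\<rfloor> + 1. (real k + 1) powr - p))"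
      using \<open>0 < C\<close> by (intro mult_left_mono[OF decay(2)]) simp
    finally show ?thesis
      by simp
  qed
  moreover have "0 < C * 2 powr p / (1 + b)"
    using \<open>0 < C\<close> \<open>-1 < b\<close> by simp
  ultimately show ?thesis
    using that by (auto simp: p_def)
qed

lemma set_integral_abs_gh1_minus_1_le:
  assumes "0 < a" "a < 1"
  obtains C where "0 < C"
    and "\<And>t. 0 \<le> t \<Longrightarrow> (LINT u:{0..t}|lborel. \<bar>gh a 1 t u - 1\<bar>) \<le> C * (1 + t) powr (1 - a)"
proof -
  obtain C where "0 < C" and C: "\<And>t. 0 \<le> t \<Longrightarrow> (LINT u:{0..t}|lborel. \<bar>gh a 1 t u - 1\<bar> ^ 1)
      \<le> C * (\<Sum>k<nat \<lfloor>t\<rfloor> + 1. (real k + 1) powr - (real 1 * a))"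
    by (rule set_integral_abs_gh1_minus_1_power_le[of a 1]) (use assms in auto)
  have "(LINT u:{0..t}|lborel. \<bar>gh a 1 t u - 1\<bar>) \<le> C / (1 - a) * (1 + t) powr (1 - a)"
    if "0 \<le> t" for t
  proof -
    have "(LINT u:{0..t}|lborel. \<bar>gh a 1 t u - 1\<bar>) \<le> C * (\<Sum>k<nat \<lfloor>t\<rfloor> + 1. (real k + 1) powr - a)"
      using C[OF that] by (simp only: power_one_right of_nat_1 mult_1)
    also have "\<dots> \<le> C * (real (nat \<lfloor>t\<rfloor> + 1) powr (1 - a) / (1 - a))"
      using assms \<open>0 < C\<close> by (intro mult_left_mono sum_succ_powr_neg_le_sublinear) auto
    also have "\<dots> \<le> C * ((1 + t) powr (1 - a) / (1 - a))"
      using assms that \<open>0 < C\<close> by (intro mult_left_mono divide_right_mono powr_mono2) auto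
    finally show ?thesis
      by simp
  qed
  moreover have "0 < C / (1 - a)"
    using \<open>0 < C\<close> assms by simp
  ultimately show ?thesis
    using that by blast
qed

lemma set_integral_abs_gh1_minus_1_sq_le:
  assumes "1 / 2 < a" "a < 1"
  obtains C where "0 < C" and "\<And>t. 0 \<le> t \<Longrightarrow> (LINT u:{0..t}|lborel. \<bar>gh a 1 t u - 1\<bar>\<^sup>2) \<le> C"
proof -
  obtain C where "0 < C" and C: "\<And>t. 0 \<le> t \<Longrightarrow> (LINT u:{0..t}|lborel. \<bar>gh a 1 t u - 1\<bar> ^ 2)
      \<le> C * (\<Sum>k<nat \<lfloor>t\<rfloor> + 1. (real k + 1) powr - (real 2 * a))"
    by (rule set_integral_abs_gh1_minus_1_power_le[of a 2]) (use assms in auto)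
  have "(LINT u:{0..t}|lborel. \<bar>gh a 1 t u - 1\<bar>\<^sup>2) \<le> C * (2 * a / (2 * a - 1))" if "0 \<le> t" for t
  proof -
    have "(LINT u:{0..t}|lborel. \<bar>gh a 1 t u - 1\<bar>\<^sup>2) \<le> C * (\<Sum>k<nat \<lfloor>t\<rfloor> + 1. (real k + 1) powr - (2 * a))"
      using C[OF that] by (simp only: of_nat_numeral)
    also have "\<dots> \<le> C * (2 * a / (2 * a - 1))"
      using assms \<open>0 < C\<close> by (intro mult_left_mono sum_succ_powr_neg_le_bounded) auto
    finally show ?thesis .
  qed
  moreover have "0 < C * (2 * a / (2 * a - 1))"
    using \<open>0 < C\<close> assms by simp
  ultimately show ?thesis
    using that by blast
qed

lemma mult_powr_one_plus_divide:
  fixes h t :: real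
  assumes "0 < h" "0 \<le> t"
  shows "h * (1 + t / h) powr (1 - a) = h powr a * (h + t) powr (1 - a)"
proof -
  have "h * (1 + t / h) powr (1 - a) = h powr a * (h powr (1 - a) * (1 + t / h) powr (1 - a))"
    using assms by (simp add: powr_add[symmetric])
  also have "h powr (1 - a) * (1 + t / h) powr (1 - a) = (h + t) powr (1 - a)"
    using assms by (simp add: powr_mult[symmetric] distrib_left)
  finally show ?thesis .
qed

lemma set_integral_abs_gh_minus_1_le:
  assumes "0 < a" "a < 1" "0 \<le> T"
  obtains C where "0 < C"
    and "\<And>t h. t \<in> {0..T} \<Longrightarrow> h \<in> {0<..1} \<Longrightarrow> (LINT u:{0..t}|lborel. \<bar>gh a h t u - 1\<bar>) \<le> C * h powr a"
proof -
  obtain C where "0 < C" and C: "\<And>t. 0 \<le> t \<Longrightarrow>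
      (LINT u:{0..t}|lborel. \<bar>gh a 1 t u - 1\<bar>) \<le> C * (1 + t) powr (1 - a)"
    using set_integral_abs_gh1_minus_1_le[OF assms(1,2)] by blast
  have "(LINT u:{0..t}|lborel. \<bar>gh a h t u - 1\<bar>) \<le> C * (1 + T) powr (1 - a) * h powr a"
    if "t \<in> {0..T}" "h \<in> {0<..1}" for t h
  proof -
    have "0 < h" "0 \<le> t / h" "(h + t) powr (1 - a) \<le> (1 + T) powr (1 - a)"
      using that assms by (auto intro: powr_mono2)
    have "(LINT u:{0..t}|lborel. \<bar>gh a h t u - 1\<bar>) = h * (LINT u:{0..t / h}|lborel. \<bar>gh a 1 (t / h) u - 1\<bar>)"
      using set_integral_gh_scale[where f="\<lambda>y. \<bar>y - 1\<bar>", OF \<open>0 < h\<close>] by simp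
    also have "\<dots> \<le> h * (C * (1 + t / h) powr (1 - a))"
      using C[OF \<open>0 \<le> t / h\<close>] \<open>0 < h\<close> by (intro mult_left_mono) auto
    also have "\<dots> = C * (h powr a * (h + t) powr (1 - a))"
      using \<open>0 < h\<close> that by (simp add: mult.left_commute mult_powr_one_plus_divide)
    also have "\<dots> \<le> C * (h powr a * (1 + T) powr (1 - a))"
      using \<open>(h + t) powr (1 - a) \<le> _\<close> \<open>0 < C\<close> by (intro mult_left_mono) auto
    finally show ?thesis
      by (simp add: mult_ac)
  qed
  moreover have "0 < C * (1 + T) powr (1 - a)"
    using \<open>0 < C\<close> assms by simp
  ultimately show ?thesis
    using that by blast
qed

lemma set_integral_abs_gh_minus_1_sq_le:
  assumes "1 / 2 < a" "a < 1"
  obtains C where "0 < C"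
    and "\<And>t h. 0 \<le> t \<Longrightarrow> 0 < h \<Longrightarrow> (LINT u:{0..t}|lborel. \<bar>gh a h t u - 1\<bar>\<^sup>2) \<le> C * h"
proof -
  obtain C where "0 < C" and C: "\<And>t. 0 \<le> t \<Longrightarrow> (LINT u:{0..t}|lborel. \<bar>gh a 1 t u - 1\<bar>\<^sup>2) \<le> C"
    using set_integral_abs_gh1_minus_1_sq_le[OF assms] by blast
  have "(LINT u:{0..t}|lborel. \<bar>gh a h t u - 1\<bar>\<^sup>2) \<le> C * h" if "0 \<le> t" "0 < h" for t h
    using set_integral_gh_scale[where f="\<lambda>y. \<bar>y - 1\<bar>\<^sup>2", OF that(2)]
      mult_left_mono[OF C[of "t / h"], of h] that
    by (simp add: mult.commute)
  with \<open>0 < C\<close> show ?thesis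
    using that by blast
qed

theorem mainTheorem4:
  fixes T \<alpha> :: real
  assumes "T > 0" and "1/2 < \<alpha>" and "\<alpha> < 1"
  shows "\<exists>C>0. \<forall>t\<in>{0..T}. \<forall>h\<in>{0<..1}.
           (LINT u:{0..t}|lborel. \<bar>gh \<alpha> h t u - 1\<bar>) \<le> C * h powr \<alpha> \<and>
           (LINT u:{0..t}|lborel. \<bar>gh \<alpha> h t u - 1\<bar>\<^sup>2) \<le> C * h"
proof -
  obtain C1 where "0 < C1" and C1: "\<And>t h. t \<in> {0..T} \<Longrightarrow> h \<in> {0<..1} \<Longrightarrow>
      (LINT u:{0..t}|lborel. \<bar>gh \<alpha> h t u - 1\<bar>) \<le> C1 * h powr \<alpha>"
    using set_integral_abs_gh_minus_1_le[of \<alpha> T] assms by auto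
  obtain C2 where "0 < C2" and C2: "\<And>t h. 0 \<le> t \<Longrightarrow> 0 < h \<Longrightarrow>
      (LINT u:{0..t}|lborel. \<bar>gh \<alpha> h t u - 1\<bar>\<^sup>2) \<le> C2 * h"
    using set_integral_abs_gh_minus_1_sq_le[OF assms(2,3)] by blast
  show ?thesis
  proof (intro exI[of _ "max C1 C2"] conjI ballI)
    show "0 < max C1 C2"
      using \<open>0 < C1\<close> by simp
    fix t h :: real
    assume t: "t \<in> {0..T}" and h: "h \<in> {0<..1}"
    show "(LINT u:{0..t}|lborel. \<bar>gh \<alpha> h t u - 1\<bar>) \<le> max C1 C2 * h powr \<alpha>"
      using C1[OF t h] mult_right_mono[of C1 "max C1 C2" "h powr \<alpha>"] by simp
    have "(LINT u:{0..t}|lborel. \<bar>gh \<alpha> h t u - 1\<bar>\<^sup>2) \<le> C2 * h"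
      using C2 t h by simp
    also have "\<dots> \<le> max C1 C2 * h"
      using h by (intro mult_right_mono) auto
    finally show "(LINT u:{0..t}|lborel. \<bar>gh \<alpha> h t u - 1\<bar>\<^sup>2) \<le> max C1 C2 * h" .
  qed
qed

end
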